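(* Assume the Standing setting below and let $x\in\Lambda$. Then: - if $\mu_+\lambda_+\eta^{-1}<1$, then $\omega(x)(v_t,v_s)=0$ for all $v_t\in T_x\Lambda$, $v_s\in E^s_x$; - if $\mu_-\lambda_-\eta<1$, then $\omega(x)(v_t,v_u)=0$ for all $v_t\in T_x\Lambda$, $v_u\in E^u_x$; - if $\lambda_+^2\eta^{-1}<1$, then $\omega(x)(v^1_s,v^2_s)=0$ for all $v^1_s,v^2_s\in E^s_x$; - if $\lambda_-^2\eta<1$, then $\omega(x)(v^1_u,v^2_u)=0$ for all $v^1_u,v^2_u\in E^u_x$.
   Context: Standing setting. A map, form or vector field is called $\mathcal C^r$ if it and its derivatives up to order $r$ are continuous and uniformly bounded; $r$ is a sufficiently large integer. $(M,\omega)$ is an orientable, connected, non-compact $d$-dimensional Riemannian manifold whose metric is $\mathcal C^r$ with uniformly bounded derivatives, and $\omega$ is a symplectic form (a closed non-degenerate 2-form). (U1): there is $\rho_0>0$ such that for every $x\in M$ the ball $B_{\rho_0}(x)$ carries a $\mathcal C^r$ coordinate chart onto the unit ball of $\mathbb R^d$, the charts and their inverses having uniformly bounded $\mathcal C^r$ norms. $f:M\to M$ is a diffeomorphism which is conformally symplectic: $f^*\omega=\eta\,\omega$ for a constant $\eta>0$. $\Lambda\subset M$ is an unbounded, boundaryless, connected, $f$-invariant submanifold which is a normally hyperbolic invariant manifold (NHIM): there is a $Df$-invariant splitting $T_xM=T_x\Lambda\oplus E^s_x\oplus E^u_x$ for $x\in\Lambda$, rates $0<\lambda_\pm<1$, $\mu_\pm\ge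 1$ with $\lambda_+\mu_-<1$, $\lambda_-\mu_+<1$, and constants $C_\pm,D_\pm>0$ such that for all $x\in\Lambda$: $v\in T_x\Lambda$ iff $\|Df^n(x)v\|\le D_+\mu_+^n\|v\|$ for all $n\ge 0$ and $\|Df^n(x)v\|\le D_-\mu_-^{|n|}\|v\|$ for all $n\le 0$; $v\in E^s_x$ iff $\|Df^n(x)v\|\le C_+\lambda_+^n\|v\|$ for all $n\ge0$; $v\in E^u_x$ iff $\|Df^n(x)v\|\le C_-\lambda_-^{|n|}\|v\|$ for all $n\le 0$. (U2): for some $\rho>0$ there is a $\mathcal C^r$ diffeomorphism with $\mathcal C^r$ inverse from a uniform neighborhood of the zero section of $E^s\oplus E^u$ onto $\mathcal O_\rho=\{y\in M: d(y,\Lambda)<\rho\}$. (U3): $f\in\mathcal C^r(\mathcal O_\rho)$, $f^{-1}\in\mathcal C^r(f(\mathcal O_\rho))$. Under these assumptions $\Lambda$ has local stable and unstable manifolds $W^{s,\rm loc}_\Lambda$, $W^{u,\rm loc}_\Lambda$ (points near $\Lambda$ whose forward, resp. backward, orbits stay near $\Lambda$; tangent at $\Lambda$ to $T\Lambda\oplus E^s$, resp. $T\Lambda\oplus E^u$), which are disjoint unions $W^{s,\rm loc}_\Lambda=\bigcup_{x\in\Lambda}W^{s,\rm loc}_x$, $W^{u,\rm loc}_\Lambda=\bigcup_{x\in\Lambda}W^{u,\rm loc}_x$ of strong stable/unstable fibers: $W^{s,\rm loc}_x$ is the set of nearby $y$ with $d(f^n(y),f^n(x))\le C\lambda_+^n$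 for all $n\ge0$ (a manifold tangent to $E^s_x$ at $x$), and analogously $W^{u,\rm loc}_x$ with $n\le 0$ and $\lambda_-$. It is assumed: (H1) $\Lambda$ is $\mathcal C^1$; (H2) $W^{s,\rm loc}_\Lambda$, $W^{u,\rm loc}_\Lambda$ are $\mathcal C^1$; (H3) the fibers $W^{s,\rm loc}_x$, $W^{u,\rm loc}_x$ are $\mathcal C^1$ uniformly in $x$; (H4) the foliations of $W^{s,\rm loc}_\Lambda$, $W^{u,\rm loc}_\Lambda$ by these fibers are of class $\mathcal C^{1,1}$ (leaves uniformly $\mathcal C^1$, depending $\mathcal C^1$ on the base point in the $\mathcal C^1$ topology). The wave maps $\Omega_+:W^{s,\rm loc}_\Lambda\to\Lambda$, $\Omega_-:W^{u,\rm loc}_\Lambda\to\Lambda$ send $y$ to the unique $x\in\Lambda$ with $y\in W^{s,\rm loc}_x$ (resp. $y\in W^{u,\rm loc}_x$); they satisfy $\Omega_\pm\circ f^n=f^n\circ\Omega_\pm$, which extends them to the global manifolds $W^s_\Lambda=\bigcup_{n\ge0}f^{-n}(W^{s,\rm loc}_\Lambda)$, $W^u_\Lambda=\bigcup_{n\ge0}f^{n}(W^{u,\rm loc}_\Lambda)$ (with global fibers $W^s_x$, $W^u_x$ defined analogously). A homoclinic channel is a submanifold $\Gamma\subset W^s_\Lambda\cap W^u_\Lambda$ (contained in finitely many iterates of the local manifolds) such that for all $x\in\Gamma$: $T_xM=T_xW^s_\Lambda+T_xW^u_\Lambda$, $T_xW^s_\Lambda\cap T_xW^u_\Lambda=T_x\Gamma$,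 $T_x\Gamma\oplus T_xW^s_{\Omega_+(x)}=T_xW^s_\Lambda$, $T_x\Gamma\oplus T_xW^u_{\Omega_-(x)}=T_xW^u_\Lambda$, and $\Omega_-|_\Gamma$ is a $\mathcal C^1$ diffeomorphism onto its image. Writing $\Omega^\Gamma_\pm=\Omega_\pm|_\Gamma$ (both $\mathcal C^1$ diffeomorphisms onto their images $H_\pm\subset\Lambda$), the scattering map is $S=\Omega_+^\Gamma\circ(\Omega_-^\Gamma)^{-1}:H_-\to H_+$. (U4): $f\in\mathcal C^r(\mathcal O)$ and $f^{-1}\in\mathcal C^r(f(\mathcal O))$, where $\mathcal O$ is the union of $\mathcal O_\rho$ with uniform neighborhoods of $W^{s,\rm loc}_\Lambda$ and $W^{u,\rm loc}_\Lambda$ (including the finitely many iterates containing $\Gamma$). (U5): $\sup_{x\in\mathcal O}\|\omega(x)\|<\infty$. For a submanifold $N$, $\omega|_N$ denotes the restriction of $\omega$ to $TN\times TN$. *)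

theory Defs
  imports "HOL-Analysis.Analysis"
begin

text \<open>Model: the Riemannian manifold M is (Nash-)isometrically embedded in a Euclidean
space 'v; T x is the tangent space of M at x (a linear subspace of 'v), Df x the
derivative (tangent map) of f at x, and omega x the symplectic form at x.\<close>

fun dfpow :: "('v \<Rightarrow> 'v) \<Rightarrow> ('v \<Rightarrow> 'v \<Rightarrow> 'v) \<Rightarrow> nat \<Rightarrow> 'v \<Rightarrow> 'v \<Rightarrow> 'v" where
  "dfpow f Df 0 x = id"
| "dfpow f Df (Suc n) x = Df ((f ^^ n) x) \<circ> dfpow f Df n x"

text \<open>Backward tangent iterate: Df^(-n)(x) = (Df^n(f^(-n) x))^(-1) restricted to tangent spaces.\<close>
definition dfneg :: "'v set \<Rightarrow> ('v \<Rightarrow> 'v set) \<Rightarrow> ('v \<Rightarrow> 'v) \<Rightarrow> ('v \<Rightarrow> 'v \<Rightarrow> 'v)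
    \<Rightarrow> nat \<Rightarrow> 'v \<Rightarrow> 'v \<Rightarrow> 'v" where
  "dfneg M T f Df n x v =
     (THE w. w \<in> T ((inv_into M f ^^ n) x) \<and> dfpow f Df n ((inv_into M f ^^ n) x) w = v)"

definition is_NHIM_splitting ::
  "'v::real_normed_vector set \<Rightarrow> ('v \<Rightarrow> 'v set) \<Rightarrow> ('v \<Rightarrow> 'v) \<Rightarrow> ('v \<Rightarrow> 'v \<Rightarrow> 'v) \<Rightarrow> 'v set
   \<Rightarrow> ('v \<Rightarrow> 'v set) \<Rightarrow> ('v \<Rightarrow> 'v set) \<Rightarrow> ('v \<Rightarrow> 'v set)
   \<Rightarrow> real \<Rightarrow> real \<Rightarrow> real \<Rightarrow> real \<Rightarrow> real \<Rightarrow> real \<Rightarrow> real \<Rightarrow> real \<Rightarrow> bool" where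
  "is_NHIM_splitting M T f Df \<Lambda> TL Es Eu lp lm mp mm Cp Cm Dp Dm \<longleftrightarrow>
     \<Lambda> \<subseteq> M \<and> f ` \<Lambda> = \<Lambda> \<and>
     0 < lp \<and> lp < 1 \<and> 0 < lm \<and> lm < 1 \<and> 1 \<le> mp \<and> 1 \<le> mm \<and>
     lp * mm < 1 \<and> lm * mp < 1 \<and> 0 < Cp \<and> 0 < Cm \<and> 0 < Dp \<and> 0 < Dm \<and>
     (\<forall>x\<in>\<Lambda>.
        subspace (TL x) \<and> subspace (Es x) \<and> subspace (Eu x) \<and>
        TL x \<subseteq> T x \<and> Es x \<subseteq> T x \<and> Eu x \<subseteq> T x \<and>
        \<comment> \<open>direct sum T_x M = T_x Lambda + E^s_x + E^u_x\<close>
        (\<forall>v\<in>T x. \<exists>!(a, b, c). a \<in> TL x \<and> b \<in> Es x \<and> c \<in> Eu x \<and> v = a + b + c) \<and>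
        \<comment> \<open>Df-invariance\<close>
        Df x ` TL x = TL (f x) \<and> Df x ` Es x = Es (f x) \<and> Df x ` Eu x = Eu (f x) \<and>
        \<comment> \<open>rate characterisations\<close>
        (\<forall>v\<in>T x. v \<in> TL x \<longleftrightarrow>
            (\<forall>n. norm (dfpow f Df n x v) \<le> Dp * mp ^ n * norm v) \<and>
            (\<forall>n. norm (dfneg M T f Df n x v) \<le> Dm * mm ^ n * norm v)) \<and>
        (\<forall>v\<in>T x. v \<in> Es x \<longleftrightarrow> (\<forall>n. norm (dfpow f Df n x v) \<le> Cp * lp ^ n * norm v)) \<and>
        (\<forall>v\<in>T x. v \<in> Eu x \<longleftrightarrow> (\<forall>n. norm (dfneg M T f Df n x v) \<le> Cm * lm ^ n * norm v)))"

end

theory Submission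
  imports Defs
begin

text \<open>Push two tangent vectors v, w at x forward n steps. Conformality multiplies
their symplectic product by \<eta>^n, while the rates bound the lengths of the images by
constants times a^n and b^n and the uniform bound on \<omega> near \<Lambda> bounds the product by
a constant times (a b)^n. Hence |\<omega> x v w| \<eta>^n = O((a b)^n), which forces \<omega> x v w = 0
when a b < \<eta>. Pulling back along Df^(-n) instead gives \<omega> x v w = \<eta>^n \<omega>(Df^(-n) v, Df^(-n) w)
= O((a b \<eta>)^n), so \<omega> x v w = 0 when a b \<eta> < 1.\<close>

lemma geometric_domination_eq_0:
  fixes c B e q :: real
  assumes dom: "\<And>n. \<bar>c\<bar> * e ^ n \<le> B * q ^ n" and "\<bar>q\<bar> < e"
  shows "c = 0"
proof -
  have e: "0 < e" using assms(2) by linarith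
  have "(\<lambda>n. B * (q / e) ^ n) \<longlonglongrightarrow> B * 0"
    using assms(2) e by (intro tendsto_mult tendsto_const LIMSEQ_power_zero) simp
  moreover have "\<bar>c\<bar> \<le> B * (q / e) ^ n" for n
    using dom[of n] e by (simp add: power_divide field_simps)
  ultimately have "\<bar>c\<bar> \<le> B * 0"
    by (intro LIMSEQ_le_const) auto
  then show ?thesis by simp
qed

lemma scaled_norm_product_mono:
  fixes K P Q :: real and p q :: "'a::real_normed_vector"
  assumes "0 \<le> K" "norm p \<le> P" "norm q \<le> Q"
  shows "K * norm p * norm q \<le> K * P * Q"
proof -
  have "0 \<le> P"
    using assms(2) norm_ge_zero order_trans by blast
  then show ?thesis
    using assms by (simp add: mult_mono mult_left_mono)
qed

lemma form_bound_nonneg_constant: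
  fixes \<omega> :: "'a \<Rightarrow> 'b::real_normed_vector \<Rightarrow> 'b \<Rightarrow> real"
  assumes "\<exists>K. \<forall>y\<in>A. \<forall>v\<in>T y. \<forall>w\<in>T y. \<bar>\<omega> y v w\<bar> \<le> K * norm v * norm w" "B \<subseteq> A"
  obtains K where "0 \<le> K"
    and "\<And>y v w. y \<in> B \<Longrightarrow> v \<in> T y \<Longrightarrow> w \<in> T y \<Longrightarrow> \<bar>\<omega> y v w\<bar> \<le> K * norm v * norm w"
proof -
  obtain K where K: "\<forall>y\<in>A. \<forall>v\<in>T y. \<forall>w\<in>T y. \<bar>\<omega> y v w\<bar> \<le> K * norm v * norm w"
    using assms(1) by blast
  have "\<bar>\<omega> y v w\<bar> \<le> max K 0 * norm v * norm w" if "y \<in> B" "v \<in> T y" "w \<in> T y" for y v w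
    using K assms(2) that by (meson max.cobounded1 mult_right_mono norm_ge_zero order_trans subsetD)
  then show ?thesis
    using that[of "max K 0"] by simp
qed

lemma funpow_in_invariant: "f ` A \<subseteq> A \<Longrightarrow> y \<in> A \<Longrightarrow> (f ^^ n) y \<in> A"
  by (induction n) auto

lemma funpow_inv_into:
  assumes "inj_on f M" "\<Lambda> \<subseteq> M" "f ` \<Lambda> = \<Lambda>" "z \<in> \<Lambda>"
  shows "(inv_into M f ^^ n) z \<in> \<Lambda>" "(f ^^ n) ((inv_into M f ^^ n) z) = z"
proof -
  have inv: "inv_into M f y \<in> \<Lambda> \<and> f (inv_into M f y) = y" if "y \<in> \<Lambda>" for y
  proof -
    have "y \<in> f ` \<Lambda>"
      using that assms(3) by simp
    then obtain a where "a \<in> \<Lambda>" "y = f a"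
      by blast
    then show ?thesis
      using assms(1,2) by (auto simp: inv_into_f_f)
  qed
  then have "inv_into M f ` \<Lambda> \<subseteq> \<Lambda>"
    by blast
  then show "(inv_into M f ^^ n) z \<in> \<Lambda>"
    using assms(4) by (rule funpow_in_invariant)
  show "(f ^^ n) ((inv_into M f ^^ n) z) = z"
    using assms(4)
  proof (induction n arbitrary: z)
    case (Suc n)
    have "(inv_into M f ^^ Suc n) z = (inv_into M f ^^ n) (inv_into M f z)"
      by (simp only: funpow_Suc_right comp_apply)
    then show ?case
      using Suc inv by simp
  qed simp
qed

lemma dfneg_eq_the_inv_into:
  "dfneg M T f Df n x = the_inv_into (T ((inv_into M f ^^ n) x)) (dfpow f Df n ((inv_into M f ^^ n) x))"
  by (simp add: fun_eq_iff dfneg_def the_inv_into_def)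

locale conformal_tangent_map =
  fixes M :: "'v::real_normed_vector set" and T :: "'v \<Rightarrow> 'v set"
    and f :: "'v \<Rightarrow> 'v" and Df :: "'v \<Rightarrow> 'v \<Rightarrow> 'v"
    and \<omega> :: "'v \<Rightarrow> 'v \<Rightarrow> 'v \<Rightarrow> real" and \<eta> :: real
  assumes f_bij: "bij_betw f M M"
    and Df_bij: "y \<in> M \<Longrightarrow> bij_betw (Df y) (T y) (T (f y))"
    and conformal: "y \<in> M \<Longrightarrow> v \<in> T y \<Longrightarrow> w \<in> T y \<Longrightarrow> \<omega> (f y) (Df y v) (Df y w) = \<eta> * \<omega> y v w"
begin

lemma f_inj: "inj_on f M"
  using f_bij by (simp add: bij_betw_def)

lemma funpow_in_M: "y \<in> M \<Longrightarrow> (f ^^ n) y \<in> M"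
  using f_bij by (intro funpow_in_invariant) (simp add: bij_betw_def)

lemma dfpow_bij_betw:
  assumes "y \<in> M"
  shows "bij_betw (dfpow f Df n y) (T y) (T ((f ^^ n) y))"
proof (induction n)
  case (Suc n)
  have "bij_betw (Df ((f ^^ n) y)) (T ((f ^^ n) y)) (T (f ((f ^^ n) y)))"
    using Df_bij[OF funpow_in_M[OF assms]] .
  then have "bij_betw (Df ((f ^^ n) y) \<circ> dfpow f Df n y) (T y) (T (f ((f ^^ n) y)))"
    by (rule bij_betw_trans[OF Suc.IH])
  then show ?case
    by (simp add: comp_def)
qed (simp add: bij_betw_id[unfolded id_def])

lemma dfpow_in_tangent: "y \<in> M \<Longrightarrow> v \<in> T y \<Longrightarrow> dfpow f Df n y v \<in> T ((f ^^ n) y)"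
  by (rule bij_betw_apply[OF dfpow_bij_betw])

lemma dfpow_conformal:
  assumes "y \<in> M" "v \<in> T y" "w \<in> T y"
  shows "\<omega> ((f ^^ n) y) (dfpow f Df n y v) (dfpow f Df n y w) = \<eta> ^ n * \<omega> y v w"
proof (induction n)
  case (Suc n)
  then show ?case
    using conformal[OF funpow_in_M[OF assms(1)] dfpow_in_tangent[OF assms(1,2)] dfpow_in_tangent[OF assms(1,3)]]
    by simp
qed simp

end

locale conformal_tangent_map_bounded_on = conformal_tangent_map +
  fixes \<Lambda> :: "'v::real_normed_vector set" and K :: real
  assumes \<Lambda>_subset: "\<Lambda> \<subseteq> M" and f_\<Lambda>: "f ` \<Lambda> = \<Lambda>" and K_nonneg: "0 \<le> K"
    and form_bound: "y \<in> \<Lambda> \<Longrightarrow> v \<in> T y \<Longrightarrow> w \<in> T y \<Longrightarrow> \<bar>\<omega> y v w\<bar> \<le> K * norm v * norm w"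
begin

lemma funpow_in_\<Lambda>: "y \<in> \<Lambda> \<Longrightarrow> (f ^^ n) y \<in> \<Lambda>"
  by (intro funpow_in_invariant) (simp add: f_\<Lambda>)

lemma dfneg_tangent_and_inverse:
  assumes "x \<in> \<Lambda>" "v \<in> T x"
  shows "dfneg M T f Df n x v \<in> T ((inv_into M f ^^ n) x)"
    and "dfpow f Df n ((inv_into M f ^^ n) x) (dfneg M T f Df n x v) = v"
proof -
  note preimage = funpow_inv_into[OF f_inj \<Lambda>_subset f_\<Lambda> assms(1), of n]
  have bij: "bij_betw (dfpow f Df n ((inv_into M f ^^ n) x)) (T ((inv_into M f ^^ n) x)) (T x)"
    using dfpow_bij_betw[of "(inv_into M f ^^ n) x" n] preimage \<Lambda>_subset by auto
  show "dfneg M T f Df n x v \<in> T ((inv_into M f ^^ n) x)"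
    using bij_betw_apply[OF bij_betw_the_inv_into[OF bij] assms(2)]
    by (simp add: dfneg_eq_the_inv_into)
  show "dfpow f Df n ((inv_into M f ^^ n) x) (dfneg M T f Df n x v) = v"
    using f_the_inv_into_f_bij_betw[OF bij] assms(2)
    by (simp add: dfneg_eq_the_inv_into)
qed

lemma form_vanishes_if_forward_decay:
  assumes x: "x \<in> \<Lambda>" and v: "v \<in> T x" and w: "w \<in> T x"
    and v_rate: "\<And>n. norm (dfpow f Df n x v) \<le> A * a ^ n * norm v"
    and w_rate: "\<And>n. norm (dfpow f Df n x w) \<le> B * b ^ n * norm w"
    and rate_gap: "\<bar>a * b\<bar> < \<bar>\<eta>\<bar>"
  shows "\<omega> x v w = 0"
proof (rule geometric_domination_eq_0[where e = "\<bar>\<eta>\<bar>" and q = "a * b"])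
  fix n
  have xM: "x \<in> M"
    using x \<Lambda>_subset by blast
  have orbit: "(f ^^ n) x \<in> \<Lambda>"
    using funpow_in_\<Lambda> x .
  have "\<bar>\<omega> x v w\<bar> * \<bar>\<eta>\<bar> ^ n = \<bar>\<omega> ((f ^^ n) x) (dfpow f Df n x v) (dfpow f Df n x w)\<bar>"
    using dfpow_conformal[OF xM v w] by (simp add: abs_mult power_abs)
  also have "\<dots> \<le> K * norm (dfpow f Df n x v) * norm (dfpow f Df n x w)"
    using form_bound[OF orbit dfpow_in_tangent[OF xM v] dfpow_in_tangent[OF xM w]] .
  also have "\<dots> \<le> K * (A * a ^ n * norm v) * (B * b ^ n * norm w)"
    using scaled_norm_product_mono[OF K_nonneg v_rate w_rate] .
  also have "\<dots> = K * A * B * norm v * norm w * (a * b) ^ n"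
    by (simp add: power_mult_distrib ac_simps)
  finally show "\<bar>\<omega> x v w\<bar> * \<bar>\<eta>\<bar> ^ n \<le> K * A * B * norm v * norm w * (a * b) ^ n" .
qed (fact rate_gap)

lemma form_vanishes_if_backward_decay:
  assumes x: "x \<in> \<Lambda>" and v: "v \<in> T x" and w: "w \<in> T x"
    and v_rate: "\<And>n. norm (dfneg M T f Df n x v) \<le> A * a ^ n * norm v"
    and w_rate: "\<And>n. norm (dfneg M T f Df n x w) \<le> B * b ^ n * norm w"
    and rate_gap: "\<bar>\<eta> * a * b\<bar> < 1"
  shows "\<omega> x v w = 0"
proof (rule geometric_domination_eq_0[where e = 1 and q = "\<bar>\<eta>\<bar> * a * b"])
  fix n
  define y where "y = (inv_into M f ^^ n) x"
  define v' where "v' = dfneg M T f Df n x v"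
  define w' where "w' = dfneg M T f Df n x w"
  have y: "y \<in> \<Lambda>" "(f ^^ n) y = x"
    unfolding y_def using funpow_inv_into[OF f_inj \<Lambda>_subset f_\<Lambda> x] .
  have v': "v' \<in> T y" "dfpow f Df n y v' = v" and w': "w' \<in> T y" "dfpow f Df n y w' = w"
    unfolding y_def v'_def w'_def using dfneg_tangent_and_inverse x v w by auto
  have "\<bar>\<omega> x v w\<bar> * 1 ^ n = \<bar>\<eta>\<bar> ^ n * \<bar>\<omega> y v' w'\<bar>"
    using dfpow_conformal[of y v' w' n] y v' w' \<Lambda>_subset by (auto simp: abs_mult power_abs)
  also have "\<dots> \<le> \<bar>\<eta>\<bar> ^ n * (K * norm v' * norm w')"
    using form_bound[OF y(1) v'(1) w'(1)] by (simp add: mult_left_mono)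
  also have "\<dots> \<le> \<bar>\<eta>\<bar> ^ n * (K * (A * a ^ n * norm v) * (B * b ^ n * norm w))"
    using scaled_norm_product_mono[OF K_nonneg v_rate w_rate] unfolding v'_def w'_def
    by (simp add: mult_left_mono)
  also have "\<dots> = K * A * B * norm v * norm w * (\<bar>\<eta>\<bar> * a * b) ^ n"
    by (simp add: power_mult_distrib ac_simps)
  finally show "\<bar>\<omega> x v w\<bar> * 1 ^ n \<le> K * A * B * norm v * norm w * (\<bar>\<eta>\<bar> * a * b) ^ n" .
qed (use rate_gap in \<open>simp add: abs_mult\<close>)

end

lemma is_NHIM_splittingD:
  assumes "is_NHIM_splitting M T f Df \<Lambda> TL Es Eu lp lm mp mm Cp Cm Dp Dm"
  shows "\<Lambda> \<subseteq> M" "f ` \<Lambda> = \<Lambda>" "0 < lp" "0 < lm" "1 \<le> mp" "1 \<le> mm"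
  using assms by (simp_all add: is_NHIM_splitting_def)

lemma is_NHIM_splitting_subspaces:
  assumes "is_NHIM_splitting M T f Df \<Lambda> TL Es Eu lp lm mp mm Cp Cm Dp Dm" "x \<in> \<Lambda>"
  shows "TL x \<subseteq> T x" "Es x \<subseteq> T x" "Eu x \<subseteq> T x"
  using assms by (simp_all add: is_NHIM_splitting_def)

lemma is_NHIM_splitting_rates:
  assumes "is_NHIM_splitting M T f Df \<Lambda> TL Es Eu lp lm mp mm Cp Cm Dp Dm" "x \<in> \<Lambda>"
  shows "v \<in> TL x \<Longrightarrow> norm (dfpow f Df n x v) \<le> Dp * mp ^ n * norm v"
    and "v \<in> TL x \<Longrightarrow> norm (dfneg M T f Df n x v) \<le> Dm * mm ^ n * norm v"
    and "v \<in> Es x \<Longrightarrow> norm (dfpow f Df n x v) \<le> Cp * lp ^ n * norm v"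
    and "v \<in> Eu x \<Longrightarrow> norm (dfneg M T f Df n x v) \<le> Cm * lm ^ n * norm v"
proof -
  note subspaces = is_NHIM_splitting_subspaces[OF assms]
  have TL: "\<forall>v\<in>T x. v \<in> TL x \<longleftrightarrow>
          (\<forall>n. norm (dfpow f Df n x v) \<le> Dp * mp ^ n * norm v) \<and>
          (\<forall>n. norm (dfneg M T f Df n x v) \<le> Dm * mm ^ n * norm v)"
    using assms unfolding is_NHIM_splitting_def by simp
  have Es: "\<forall>v\<in>T x. v \<in> Es x \<longleftrightarrow> (\<forall>n. norm (dfpow f Df n x v) \<le> Cp * lp ^ n * norm v)"
    using assms unfolding is_NHIM_splitting_def by simp
  have Eu: "\<forall>v\<in>T x. v \<in> Eu x \<longleftrightarrow> (\<forall>n. norm (dfneg M T f Df n x v) \<le> Cm * lm ^ n * norm v)"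
    using assms unfolding is_NHIM_splitting_def by simp
  show "v \<in> TL x \<Longrightarrow> norm (dfpow f Df n x v) \<le> Dp * mp ^ n * norm v"
    and "v \<in> TL x \<Longrightarrow> norm (dfneg M T f Df n x v) \<le> Dm * mm ^ n * norm v"
    using TL subspaces(1) by blast+
  show "v \<in> Es x \<Longrightarrow> norm (dfpow f Df n x v) \<le> Cp * lp ^ n * norm v"
    using Es subspaces(2) by blast
  show "v \<in> Eu x \<Longrightarrow> norm (dfneg M T f Df n x v) \<le> Cm * lm ^ n * norm v"
    using Eu subspaces(3) by blast
qed

theorem lemma6p4:
  fixes M Onb \<Lambda> :: "'v::euclidean_space set"
    and T TL Es Eu :: "'v \<Rightarrow> 'v set"
    and f :: "'v \<Rightarrow> 'v" and Df :: "'v \<Rightarrow> 'v \<Rightarrow> 'v"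
    and \<omega> :: "'v \<Rightarrow> 'v \<Rightarrow> 'v \<Rightarrow> real"
    and \<eta> lp lm mp mm Cp Cm Dp Dm :: real and d :: nat and x :: 'v
  assumes tangent: "\<forall>y\<in>M. subspace (T y) \<and> dim (T y) = d"
    and f_bij: "bij_betw f M M"
    and f_deriv: "\<forall>y\<in>M. (f has_derivative Df y) (at y within M)"
    and Df_tangent: "\<forall>y\<in>M. linear (Df y) \<and> bij_betw (Df y) (T y) (T (f y))"
    and omega_bilinear: "\<forall>y\<in>M. bilinear (\<omega> y)"
    and omega_antisym: "\<forall>y\<in>M. \<forall>v\<in>T y. \<forall>w\<in>T y. \<omega> y v w = - \<omega> y w v"
    and omega_nondeg: "\<forall>y\<in>M. \<forall>v\<in>T y. (\<forall>w\<in>T y. \<omega> y v w = 0) \<longrightarrow> v = 0"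
    and eta_pos: "\<eta> > 0"
    and conformal: "\<forall>y\<in>M. \<forall>v\<in>T y. \<forall>w\<in>T y. \<omega> (f y) (Df y v) (Df y w) = \<eta> * \<omega> y v w"
    and NHIM: "is_NHIM_splitting M T f Df \<Lambda> TL Es Eu lp lm mp mm Cp Cm Dp Dm"
    and O_nbhd: "\<Lambda> \<subseteq> Onb" "Onb \<subseteq> M"
    and U5: "\<exists>K. \<forall>y\<in>Onb. \<forall>v\<in>T y. \<forall>w\<in>T y. \<bar>\<omega> y v w\<bar> \<le> K * norm v * norm w"
    and x_in: "x \<in> \<Lambda>"
  shows "(mp * lp / \<eta> < 1 \<longrightarrow> (\<forall>vt\<in>TL x. \<forall>vs\<in>Es x. \<omega> x vt vs = 0))
       \<and> (mm * lm * \<eta> < 1 \<longrightarrow> (\<forall>vt\<in>TL x. \<forall>vu\<in>Eu x. \<omega> x vt vu = 0))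
       \<and> (lp\<^sup>2 / \<eta> < 1 \<longrightarrow> (\<forall>v1\<in>Es x. \<forall>v2\<in>Es x. \<omega> x v1 v2 = 0))
       \<and> (lm\<^sup>2 * \<eta> < 1 \<longrightarrow> (\<forall>v1\<in>Eu x. \<forall>v2\<in>Eu x. \<omega> x v1 v2 = 0))"
proof -
  note NHIM_global = is_NHIM_splittingD[OF NHIM]
  note rates = is_NHIM_splitting_rates[OF NHIM x_in]
  note subspaces = is_NHIM_splitting_subspaces[OF NHIM x_in]
  obtain K where K: "0 \<le> K"
    "\<And>y v w. y \<in> \<Lambda> \<Longrightarrow> v \<in> T y \<Longrightarrow> w \<in> T y \<Longrightarrow> \<bar>\<omega> y v w\<bar> \<le> K * norm v * norm w"
    using form_bound_nonneg_constant[OF U5 O_nbhd(1)] by blast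
  interpret conformal_tangent_map_bounded_on M T f Df \<omega> \<eta> \<Lambda> K
    using f_bij Df_tangent conformal NHIM_global(1,2) K by unfold_locales auto
  show ?thesis
  proof (intro conjI impI ballI)
    fix vt vs assume "mp * lp / \<eta> < 1" "vt \<in> TL x" "vs \<in> Es x"
    then show "\<omega> x vt vs = 0"
      using subspaces eta_pos NHIM_global(3,5)
      by (intro form_vanishes_if_forward_decay[OF x_in _ _ rates(1) rates(3)]) (auto simp: field_simps)
  next
    fix vt vu assume "mm * lm * \<eta> < 1" "vt \<in> TL x" "vu \<in> Eu x"
    then show "\<omega> x vt vu = 0"
      using subspaces eta_pos NHIM_global(4,6)
      by (intro form_vanishes_if_backward_decay[OF x_in _ _ rates(2) rates(4)]) (auto simp: field_simps)
  next
    fix v1 v2 assume "lp\<^sup>2 / \<eta> < 1" "v1 \<in> Es x" "v2 \<in> Es x"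
    then show "\<omega> x v1 v2 = 0"
      using subspaces eta_pos NHIM_global(3)
      by (intro form_vanishes_if_forward_decay[OF x_in _ _ rates(3) rates(3)])
        (auto simp: field_simps power2_eq_square)
  next
    fix v1 v2 assume "lm\<^sup>2 * \<eta> < 1" "v1 \<in> Eu x" "v2 \<in> Eu x"
    then show "\<omega> x v1 v2 = 0"
      using subspaces eta_pos NHIM_global(4)
      by (intro form_vanishes_if_backward_decay[OF x_in _ _ rates(4) rates(4)])
        (auto simp: field_simps power2_eq_square)
  qed
qed

end
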